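(* Let $A>0$ and let $\tilde n,\tilde m$ be probability measures on $\mathbb R$ with finite second moment such that $\int y\,\tilde n(dy)=\int y\,\tilde m(dy)$. Then \[W_2\big(T(\tilde n),T(\tilde m)\big)\leq\frac{1}{\sqrt2}\,W_2(\tilde n,\tilde m).\]
   Context: $\Gamma_{A/2}(y):=\frac{1}{\sqrt{2\pi A}}e^{-|y|^2/A}$ (Gaussian density of variance $A/2$). For a probability measure $\tilde n$ on $\mathbb R$ with finite second moment, $T(\tilde n)$ is the probability density \[T(\tilde n)(y):=\int\!\!\int\Gamma_{A/2}\Big(y-\frac{y_*+y_*'}{2}\Big)\,\tilde n(dy_* )\,\tilde n(dy_*').\] $W_2$ is the quadratic Wasserstein distance: $W_2(\mu,\nu)^2=\inf_\pi\int|x-y|^2\,d\pi(x,y)$, infimum over probability measures $\pi$ on $\mathbb R^2$ with marginals $\mu$ and $\nu$. *)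

theory Defs
  imports "HOL-Probability.Probability"
begin

text \<open>Gaussian density of variance A/2 (normalised so that it integrates to 1).\<close>
definition Gamma_half :: "real \<Rightarrow> real \<Rightarrow> real" where
  "Gamma_half A y = exp (- (y\<^sup>2) / A) / sqrt (pi * A)"

definition prob_2 :: "real measure \<Rightarrow> bool" where
  "prob_2 \<mu> \<longleftrightarrow> prob_space \<mu> \<and> sets \<mu> = sets borel \<and> integrable \<mu> (\<lambda>y. y\<^sup>2)"

definition T_op :: "real \<Rightarrow> real measure \<Rightarrow> real measure" where
  "T_op A n = density lborel
     (\<lambda>y. \<integral>\<^sup>+ a. \<integral>\<^sup>+ b. ennreal (Gamma_half A (y - (a + b) / 2)) \<partial>n \<partial>n)"

definition couplings :: "real measure \<Rightarrow> real measure \<Rightarrow> (real \<times> real) measure set" where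
  "couplings \<mu> \<nu> = {\<pi>. prob_space \<pi> \<and> sets \<pi> = sets (borel :: (real \<times> real) measure) \<and>
      distr \<pi> borel fst = \<mu> \<and> distr \<pi> borel snd = \<nu>}"

definition W2_sq :: "real measure \<Rightarrow> real measure \<Rightarrow> ennreal" where
  "W2_sq \<mu> \<nu> = (INF \<pi>\<in>couplings \<mu> \<nu>. \<integral>\<^sup>+ p. ennreal ((fst p - snd p)\<^sup>2) \<partial>\<pi>)"

definition W2 :: "real measure \<Rightarrow> real measure \<Rightarrow> real" where
  "W2 \<mu> \<nu> = sqrt (enn2real (W2_sq \<mu> \<nu>))"

end

theory Submission
  imports Defs
begin

text \<open>If \<open>X, X'\<close> are independent with law \<open>\<mu>\<close> and \<open>Z\<close> is an independent Gaussian of variance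
  \<open>A/2\<close>, then \<open>T(\<mu>)\<close> is the law of \<open>(X + X')/2 + Z\<close>. Hence, given any coupling \<open>\<pi>\<close> of \<open>n\<close>
  and \<open>m\<close>, two independent copies \<open>(X, Y), (X', Y')\<close> of \<open>\<pi>\<close> and one shared noise \<open>Z\<close> yield
  the coupling \<open>((X + X')/2 + Z, (Y + Y')/2 + Z)\<close> of \<open>T(n)\<close> and \<open>T(m)\<close>. Its cost is
  \<open>E((D + D')/2)\<^sup>2 = (E D\<^sup>2 + (E D)\<^sup>2)/2\<close> with \<open>D = X - Y\<close>, and \<open>E D = 0\<close> because the means agree.
  Taking the infimum over \<open>\<pi>\<close> gives \<open>2 W\<^sub>2(T n, T m)\<^sup>2 \<le> W\<^sub>2(n, m)\<^sup>2\<close>.\<close>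

definition Gamma_measure :: "real \<Rightarrow> real measure" where
  "Gamma_measure A = density lborel (\<lambda>y. ennreal (Gamma_half A y))"

lemma Gamma_half_eq_normal_density:
  assumes "A > 0"
  shows "Gamma_half A = normal_density 0 (sqrt (A / 2))"
proof
  fix y
  have "2 * (sqrt (A / 2))\<^sup>2 = A" using assms by simp
  then show "Gamma_half A y = normal_density 0 (sqrt (A / 2)) y"
    unfolding Gamma_half_def normal_density_def by (simp add: mult.assoc)
qed

lemma borel_measurable_Gamma_half [measurable]: "Gamma_half A \<in> borel_measurable borel"
  unfolding Gamma_half_def[abs_def] by measurable

lemma sets_Gamma_measure [simp, measurable_cong]: "sets (Gamma_measure A) = sets borel"
  by (simp add: Gamma_measure_def)

lemma prob_space_Gamma_measure: "A > 0 \<Longrightarrow> prob_space (Gamma_measure A)"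
  using prob_space_normal_density[of "sqrt (A / 2)" 0]
  by (simp add: Gamma_measure_def Gamma_half_eq_normal_density)

lemma T_op_eq_distr_midpoint_plus_noise:
  assumes "A > 0" and "sigma_finite_measure \<mu>" and sets_\<mu> [measurable_cong]: "sets \<mu> = sets borel"
  shows "T_op A \<mu> = distr ((\<mu> \<Otimes>\<^sub>M \<mu>) \<Otimes>\<^sub>M Gamma_measure A) borel (\<lambda>((a, b), z). (a + b) / 2 + z)"
proof (rule measure_eqI)
  interpret N: prob_space "Gamma_measure A" using prob_space_Gamma_measure[OF \<open>A > 0\<close>] .
  interpret \<mu>: sigma_finite_measure \<mu> by fact
  interpret \<mu>\<mu>L: pair_sigma_finite "\<mu> \<Otimes>\<^sub>M \<mu>" lborel
    by (simp add: pair_sigma_finite_def sigma_finite_pair_measure \<mu>.sigma_finite_measure_axioms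
        lborel.sigma_finite_measure_axioms)
  define G where "G = Gamma_half A"
  fix S assume "S \<in> sets (T_op A \<mu>)"
  then have [measurable]: "S \<in> sets borel" by (simp add: T_op_def)
  have shift: "(\<integral>\<^sup>+ z. indicator S (c + z) \<partial>Gamma_measure A) = (\<integral>\<^sup>+ y. ennreal (G (y - c)) * indicator S y \<partial>lborel)"
    for c
  proof -
    have "(\<integral>\<^sup>+ z. indicator S (c + z) \<partial>Gamma_measure A) = (\<integral>\<^sup>+ z. ennreal (G z) * indicator S (c + z) \<partial>lborel)"
      unfolding Gamma_measure_def G_def by (subst nn_integral_density) auto
    also have "\<dots> = (\<integral>\<^sup>+ y. ennreal (G (y - c)) * indicator S y \<partial>lborel)"
      using nn_integral_real_affine[of "\<lambda>y. ennreal (G (y - c)) * indicator S y" 1 c]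
      by (simp add: G_def)
    finally show ?thesis .
  qed
  have "emeasure (distr ((\<mu> \<Otimes>\<^sub>M \<mu>) \<Otimes>\<^sub>M Gamma_measure A) borel (\<lambda>((a, b), z). (a + b) / 2 + z)) S
      = (\<integral>\<^sup>+ x. indicator S x \<partial>distr ((\<mu> \<Otimes>\<^sub>M \<mu>) \<Otimes>\<^sub>M Gamma_measure A) borel (\<lambda>((a, b), z). (a + b) / 2 + z))"
    by simp
  also have "\<dots> = (\<integral>\<^sup>+ x. indicator S ((fst (fst x) + snd (fst x)) / 2 + snd x) \<partial>((\<mu> \<Otimes>\<^sub>M \<mu>) \<Otimes>\<^sub>M Gamma_measure A))"
    by (subst nn_integral_distr) (auto simp: split_beta')
  also have "\<dots> = (\<integral>\<^sup>+ ab. \<integral>\<^sup>+ z. indicator S ((fst ab + snd ab) / 2 + z) \<partial>Gamma_measure A \<partial>(\<mu> \<Otimes>\<^sub>M \<mu>))"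
    by (subst N.nn_integral_fst[symmetric]) (auto simp: split_beta')
  also have "\<dots> = (\<integral>\<^sup>+ ab. \<integral>\<^sup>+ y. ennreal (G (y - (fst ab + snd ab) / 2)) * indicator S y \<partial>lborel \<partial>(\<mu> \<Otimes>\<^sub>M \<mu>))"
    by (simp only: shift)
  also have "\<dots> = (\<integral>\<^sup>+ y. \<integral>\<^sup>+ ab. ennreal (G (y - (fst ab + snd ab) / 2)) * indicator S y \<partial>(\<mu> \<Otimes>\<^sub>M \<mu>) \<partial>lborel)"
    using \<mu>\<mu>L.Fubini'[of "\<lambda>ab y. ennreal (G (y - (fst ab + snd ab) / 2)) * indicator S y"]
    by (simp add: G_def)
  also have "\<dots> = (\<integral>\<^sup>+ y. (\<integral>\<^sup>+ a. \<integral>\<^sup>+ b. ennreal (G (y - (a + b) / 2)) \<partial>\<mu> \<partial>\<mu>) * indicator S y \<partial>lborel)"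
    by (simp add: \<mu>.nn_integral_fst[symmetric] nn_integral_multc G_def)
  also have "\<dots> = emeasure (T_op A \<mu>) S"
    by (simp add: T_op_def G_def emeasure_density)
  finally show "emeasure (T_op A \<mu>) S = emeasure (distr ((\<mu> \<Otimes>\<^sub>M \<mu>) \<Otimes>\<^sub>M Gamma_measure A) borel (\<lambda>((a, b), z). (a + b) / 2 + z)) S" ..
qed (simp add: T_op_def)

lemma distr_midpoint_plus_noise_image:
  fixes h :: "'a \<Rightarrow> real"
  assumes "A > 0" and "prob_space \<pi>" and [measurable]: "h \<in> borel_measurable \<pi>"
  shows "distr ((\<pi> \<Otimes>\<^sub>M \<pi>) \<Otimes>\<^sub>M Gamma_measure A) borel (\<lambda>((p, q), z). (h p + h q) / 2 + z)
       = T_op A (distr \<pi> borel h)"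
proof -
  interpret \<pi>: prob_space \<pi> by fact
  interpret N: prob_space "Gamma_measure A" using prob_space_Gamma_measure[OF \<open>A > 0\<close>] .
  define \<mu> where "\<mu> = distr \<pi> borel h"
  interpret \<mu>: prob_space \<mu> unfolding \<mu>_def by (rule \<pi>.prob_space_distr) simp
  have "(\<mu> \<Otimes>\<^sub>M \<mu>) \<Otimes>\<^sub>M distr (Gamma_measure A) borel (\<lambda>z. z)
      = distr ((\<pi> \<Otimes>\<^sub>M \<pi>) \<Otimes>\<^sub>M Gamma_measure A) ((borel \<Otimes>\<^sub>M borel) \<Otimes>\<^sub>M borel)
          (\<lambda>((p, q), z). ((h p, h q), z))"
    unfolding \<mu>_def
    by (subst pair_measure_distr, simp_all add: N.sigma_finite_measure_axioms \<mu>.sigma_finite_measure_axioms[unfolded \<mu>_def])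
       (subst pair_measure_distr, simp_all add: split_beta' distr_id2 N.sigma_finite_measure_axioms)
  then have "(\<mu> \<Otimes>\<^sub>M \<mu>) \<Otimes>\<^sub>M Gamma_measure A
      = distr ((\<pi> \<Otimes>\<^sub>M \<pi>) \<Otimes>\<^sub>M Gamma_measure A) ((borel \<Otimes>\<^sub>M borel) \<Otimes>\<^sub>M borel)
          (\<lambda>((p, q), z). ((h p, h q), z))"
    by (simp add: distr_id2)
  then show ?thesis
    using T_op_eq_distr_midpoint_plus_noise[OF \<open>A > 0\<close> \<mu>.sigma_finite_measure_axioms]
    by (simp add: \<mu>_def distr_distr comp_def split_beta')
qed

lemma (in prob_space) nn_integral_square_half_sum:
  fixes f :: "'a \<Rightarrow> real"
  assumes [measurable]: "f \<in> borel_measurable M" and f2: "integrable M (\<lambda>x. (f x)\<^sup>2)"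
  shows "(\<integral>\<^sup>+ x. \<integral>\<^sup>+ y. ennreal (((f x + f y) / 2)\<^sup>2) \<partial>M \<partial>M)
       = ennreal (((\<integral>x. (f x)\<^sup>2 \<partial>M) + (\<integral>x. f x \<partial>M)\<^sup>2) / 2)"
proof -
  have f1: "integrable M f" using square_integrable_imp_integrable[OF _ f2] by simp
  define E where "E = (\<integral>x. (f x)\<^sup>2 \<partial>M)"
  define m where "m = (\<integral>x. f x \<partial>M)"
  have expand: "((a + f y) / 2)\<^sup>2 = (a\<^sup>2 + 2 * a * f y + (f y)\<^sup>2) / 4" for a y
    by (simp add: power2_eq_square field_simps)
  have integral_expand: "(\<integral>y. (a\<^sup>2 + 2 * a * f y + (f y)\<^sup>2) / 4 \<partial>M) = (a\<^sup>2 + 2 * a * m + E) / 4" for a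
    using f1 f2 by (simp add: E_def m_def prob_space)
  have nonneg: "0 \<le> (a\<^sup>2 + 2 * a * f y + (f y)\<^sup>2) / 4" for a y
    using expand[of a y] by (metis zero_le_power2)
  have inner: "(\<integral>\<^sup>+ y. ennreal (((a + f y) / 2)\<^sup>2) \<partial>M) = ennreal ((a\<^sup>2 + 2 * a * m + E) / 4)" for a
    unfolding expand integral_expand[symmetric] using f1 f2 nonneg
    by (intro nn_integral_eq_integral) auto
  have inner_nonneg: "0 \<le> (a\<^sup>2 + 2 * a * m + E) / 4" for a
    unfolding integral_expand[symmetric] using nonneg by simp
  have "(\<integral>\<^sup>+ x. \<integral>\<^sup>+ y. ennreal (((f x + f y) / 2)\<^sup>2) \<partial>M \<partial>M)
      = (\<integral>\<^sup>+ x. ennreal (((f x)\<^sup>2 + 2 * f x * m + E) / 4) \<partial>M)"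
    by (simp add: inner)
  also have "\<dots> = ennreal (\<integral>x. ((f x)\<^sup>2 + 2 * f x * m + E) / 4 \<partial>M)"
    using f1 f2 inner_nonneg by (intro nn_integral_eq_integral) auto
  also have "(\<integral>x. ((f x)\<^sup>2 + 2 * f x * m + E) / 4 \<partial>M) = (E + m\<^sup>2) / 2"
    using f1 f2 by (simp add: E_def m_def prob_space power2_eq_square field_simps)
  finally show ?thesis by (simp add: E_def m_def)
qed

definition transport_cost :: "(real \<times> real) measure \<Rightarrow> ennreal" where
  "transport_cost \<pi> = (\<integral>\<^sup>+ p. ennreal ((fst p - snd p)\<^sup>2) \<partial>\<pi>)"

lemma W2_sq_eq_INF_transport_cost: "W2_sq \<mu> \<nu> = (INF \<pi>\<in>couplings \<mu> \<nu>. transport_cost \<pi>)"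
  unfolding W2_sq_def transport_cost_def ..

lemma transport_cost_eq_integral:
  "integrable \<pi> (\<lambda>p. (fst p - snd p)\<^sup>2) \<Longrightarrow> transport_cost \<pi> = ennreal (\<integral>p. (fst p - snd p)\<^sup>2 \<partial>\<pi>)"
  unfolding transport_cost_def by (rule nn_integral_eq_integral) auto

lemma couplingsD:
  assumes "\<pi> \<in> couplings \<mu> \<nu>"
  shows "prob_space \<pi>" and "sets \<pi> = sets (borel \<Otimes>\<^sub>M borel)"
    and "\<mu> = distr \<pi> borel fst" and "\<nu> = distr \<pi> borel snd"
  using assms unfolding couplings_def by (simp_all only: mem_Collect_eq borel_prod)

lemma couplings_measurable_fst_snd:
  assumes "\<pi> \<in> couplings \<mu> \<nu>"
  shows "fst \<in> borel_measurable \<pi>" and "snd \<in> borel_measurable \<pi>"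
  by (subst measurable_cong_sets[OF couplingsD(2)[OF assms] refl], measurable)+

lemma couplings_integrable_square_diff:
  assumes "\<pi> \<in> couplings \<mu> \<nu>" and "integrable \<mu> (\<lambda>x. x\<^sup>2)" and "integrable \<nu> (\<lambda>x. x\<^sup>2)"
  shows "integrable \<pi> (\<lambda>p. (fst p - snd p)\<^sup>2)"
proof -
  note \<mu> = couplingsD(3)[OF assms(1)] and \<nu> = couplingsD(4)[OF assms(1)]
  note [measurable] = couplings_measurable_fst_snd[OF assms(1)]
  have "integrable \<pi> (\<lambda>p. (fst p)\<^sup>2)"
    using assms(2) integrable_distr_eq[of fst \<pi> borel "\<lambda>x. x\<^sup>2"] unfolding \<mu> by simp
  moreover have "integrable \<pi> (\<lambda>p. (snd p)\<^sup>2)"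
    using assms(3) integrable_distr_eq[of snd \<pi> borel "\<lambda>x. x\<^sup>2"] unfolding \<nu> by simp
  ultimately have dominant: "integrable \<pi> (\<lambda>p. 2 * (fst p)\<^sup>2 + 2 * (snd p)\<^sup>2)"
    by simp
  have bound: "norm ((a - b)\<^sup>2) \<le> norm (2 * a\<^sup>2 + 2 * b\<^sup>2)" for a b :: real
  proof -
    have "(a - b)\<^sup>2 \<le> 2 * a\<^sup>2 + 2 * b\<^sup>2"
      using zero_le_power2[of "a + b"] by (simp add: power2_eq_square algebra_simps)
    then show ?thesis by simp
  qed
  show ?thesis
    by (rule Bochner_Integration.integrable_bound[OF dominant _ AE_I2[OF bound]]) measurable
qed

lemma couplings_integral_diff:
  assumes "\<pi> \<in> couplings \<mu> \<nu>" and "integrable \<mu> (\<lambda>x. x)" and "integrable \<nu> (\<lambda>x. x)"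
  shows "(\<integral>p. fst p - snd p \<partial>\<pi>) = (\<integral>x. x \<partial>\<mu>) - (\<integral>x. x \<partial>\<nu>)"
proof -
  note \<mu> = couplingsD(3)[OF assms(1)] and \<nu> = couplingsD(4)[OF assms(1)]
  note [measurable] = couplings_measurable_fst_snd[OF assms(1)]
  have "integrable \<pi> fst"
    using assms(2) unfolding \<mu> by (subst (asm) integrable_distr_eq) simp_all
  moreover have "integrable \<pi> snd"
    using assms(3) unfolding \<nu> by (subst (asm) integrable_distr_eq) simp_all
  ultimately have "(\<integral>p. fst p - snd p \<partial>\<pi>) = (\<integral>p. fst p \<partial>\<pi>) - (\<integral>p. snd p \<partial>\<pi>)"
    by (rule Bochner_Integration.integral_diff)
  also have "\<dots> = (\<integral>x. x \<partial>\<mu>) - (\<integral>x. x \<partial>\<nu>)"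
    unfolding \<mu> \<nu> by (subst (1 2) integral_distr) simp_all
  finally show ?thesis .
qed

lemma pair_measure_in_couplings:
  assumes "prob_space \<mu>" and "prob_space \<nu>"
    and sets_\<mu>: "sets \<mu> = sets borel" and sets_\<nu>: "sets \<nu> = sets borel"
  shows "\<mu> \<Otimes>\<^sub>M \<nu> \<in> couplings \<mu> \<nu>"
proof -
  interpret \<mu>: prob_space \<mu> by fact
  interpret \<nu>: prob_space \<nu> by fact
  interpret \<mu>\<nu>: pair_prob_space \<mu> \<nu> ..
  have "distr (\<mu> \<Otimes>\<^sub>M \<nu>) borel fst = distr (\<mu> \<Otimes>\<^sub>M \<nu>) \<mu> fst"
    using sets_\<mu> by (intro distr_cong) simp_all
  also have "\<dots> = \<mu>" by (rule \<nu>.distr_pair_fst)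
  finally have "distr (\<mu> \<Otimes>\<^sub>M \<nu>) borel fst = \<mu>" .
  moreover have "distr (\<mu> \<Otimes>\<^sub>M \<nu>) borel snd = distr (\<nu> \<Otimes>\<^sub>M \<mu>) \<nu> fst"
    using sets_\<nu> by (subst \<mu>\<nu>.distr_pair_swap, subst distr_distr) (auto intro!: distr_cong)
  then have "distr (\<mu> \<Otimes>\<^sub>M \<nu>) borel snd = \<nu>" by (simp add: \<mu>.distr_pair_fst)
  moreover have "sets (\<mu> \<Otimes>\<^sub>M \<nu>) = sets (borel :: (real \<times> real) measure)"
    unfolding borel_prod[symmetric] by (intro sets_pair_measure_cong sets_\<mu> sets_\<nu>)
  ultimately show ?thesis
    unfolding couplings_def by (simp add: prob_space_pair \<mu>.prob_space_axioms \<nu>.prob_space_axioms)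
qed

lemma W2_sq_less_top:
  assumes "prob_2 \<mu>" and "prob_2 \<nu>"
  shows "W2_sq \<mu> \<nu> < \<infinity>"
proof -
  have product: "\<mu> \<Otimes>\<^sub>M \<nu> \<in> couplings \<mu> \<nu>"
    using assms by (intro pair_measure_in_couplings) (auto simp: prob_2_def)
  have "W2_sq \<mu> \<nu> \<le> transport_cost (\<mu> \<Otimes>\<^sub>M \<nu>)"
    unfolding W2_sq_eq_INF_transport_cost by (rule INF_lower[OF product])
  also have "\<dots> < \<infinity>"
    using couplings_integrable_square_diff[OF product] assms
    by (simp add: transport_cost_eq_integral prob_2_def)
  finally show ?thesis .
qed

definition midpoint_coupling :: "real \<Rightarrow> (real \<times> real) measure \<Rightarrow> (real \<times> real) measure" where
  "midpoint_coupling A \<pi> = distr ((\<pi> \<Otimes>\<^sub>M \<pi>) \<Otimes>\<^sub>M Gamma_measure A) borel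
     (\<lambda>((p, q), z). ((fst p + fst q) / 2 + z, (snd p + snd q) / 2 + z))"

lemma measurable_midpoint_plus_noise:
  assumes sets_\<pi>: "sets \<pi> = sets (borel \<Otimes>\<^sub>M borel)"
  shows "(\<lambda>((p, q), z). ((fst p + fst q) / 2 + z, (snd p + snd q) / 2 + z))
      \<in> measurable ((\<pi> \<Otimes>\<^sub>M \<pi>) \<Otimes>\<^sub>M Gamma_measure A) (borel :: (real \<times> real) measure)"
proof -
  have "sets ((\<pi> \<Otimes>\<^sub>M \<pi>) \<Otimes>\<^sub>M Gamma_measure A)
      = sets (((borel \<Otimes>\<^sub>M borel) \<Otimes>\<^sub>M (borel \<Otimes>\<^sub>M borel)) \<Otimes>\<^sub>M borel)"
    by (intro sets_pair_measure_cong sets_\<pi> sets_Gamma_measure)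
  then show ?thesis
    unfolding split_beta' borel_prod[symmetric] by (subst measurable_cong_sets[OF _ refl]) measurable
qed

lemma midpoint_coupling_in_couplings:
  assumes "A > 0" and "\<pi> \<in> couplings \<mu> \<nu>"
  shows "midpoint_coupling A \<pi> \<in> couplings (T_op A \<mu>) (T_op A \<nu>)"
proof -
  note \<mu> = couplingsD(3)[OF assms(2)] and \<nu> = couplingsD(4)[OF assms(2)]
  have "prob_space \<pi>" and sets_\<pi>: "sets \<pi> = sets (borel \<Otimes>\<^sub>M borel)"
    using couplingsD[OF assms(2)] by simp_all
  note [measurable] = couplings_measurable_fst_snd[OF assms(2)]
  interpret N: prob_space "Gamma_measure A" using prob_space_Gamma_measure[OF \<open>A > 0\<close>] .
  note [measurable] = measurable_midpoint_plus_noise[OF sets_\<pi>]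
  have [measurable]: "fst \<in> borel_measurable (borel :: (real \<times> real) measure)"
    unfolding borel_prod[symmetric] by measurable
  have [measurable]: "snd \<in> borel_measurable (borel :: (real \<times> real) measure)"
    unfolding borel_prod[symmetric] by measurable
  have "prob_space ((\<pi> \<Otimes>\<^sub>M \<pi>) \<Otimes>\<^sub>M Gamma_measure A)"
    by (intro prob_space_pair \<open>prob_space \<pi>\<close> N.prob_space_axioms)
  then have "prob_space (midpoint_coupling A \<pi>)"
    unfolding midpoint_coupling_def by (rule prob_space.prob_space_distr) measurable
  moreover have "distr (midpoint_coupling A \<pi>) borel fst = T_op A \<mu>"
  proof -
    have "distr (midpoint_coupling A \<pi>) borel fst
        = distr ((\<pi> \<Otimes>\<^sub>M \<pi>) \<Otimes>\<^sub>M Gamma_measure A) borel (\<lambda>((p, q), z). (fst p + fst q) / 2 + z)"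
      unfolding midpoint_coupling_def by (subst distr_distr) (auto intro!: distr_cong)
    also have "\<dots> = T_op A \<mu>"
      unfolding \<mu> by (rule distr_midpoint_plus_noise_image[OF \<open>A > 0\<close> \<open>prob_space \<pi>\<close>]) measurable
    finally show ?thesis .
  qed
  moreover have "distr (midpoint_coupling A \<pi>) borel snd = T_op A \<nu>"
  proof -
    have "distr (midpoint_coupling A \<pi>) borel snd
        = distr ((\<pi> \<Otimes>\<^sub>M \<pi>) \<Otimes>\<^sub>M Gamma_measure A) borel (\<lambda>((p, q), z). (snd p + snd q) / 2 + z)"
      unfolding midpoint_coupling_def by (subst distr_distr) (auto intro!: distr_cong)
    also have "\<dots> = T_op A \<nu>"
      unfolding \<nu> by (rule distr_midpoint_plus_noise_image[OF \<open>A > 0\<close> \<open>prob_space \<pi>\<close>]) measurable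
    finally show ?thesis .
  qed
  ultimately show ?thesis
    by (simp add: couplings_def midpoint_coupling_def)
qed

lemma transport_cost_midpoint_coupling:
  assumes "A > 0" and "prob_space \<pi>" and sets_\<pi>: "sets \<pi> = sets (borel \<Otimes>\<^sub>M borel)"
    and "integrable \<pi> (\<lambda>p. (fst p - snd p)\<^sup>2)"
  shows "transport_cost (midpoint_coupling A \<pi>)
       = ennreal (((\<integral>p. (fst p - snd p)\<^sup>2 \<partial>\<pi>) + (\<integral>p. fst p - snd p \<partial>\<pi>)\<^sup>2) / 2)"
proof -
  interpret \<pi>: prob_space \<pi> by fact
  interpret N: prob_space "Gamma_measure A" using prob_space_Gamma_measure[OF \<open>A > 0\<close>] .
  note [measurable_cong] = sets_\<pi>
  define d where "d p = fst p - snd p" for p :: "real \<times> real"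
  note [measurable] = measurable_midpoint_plus_noise[OF sets_\<pi>]
  have [measurable]: "(\<lambda>p. (fst p - snd p)\<^sup>2) \<in> borel_measurable (borel :: (real \<times> real) measure)"
    unfolding borel_prod[symmetric] by measurable
  have [measurable]: "d \<in> borel_measurable \<pi>"
    unfolding d_def[abs_def] by measurable
  have "transport_cost (midpoint_coupling A \<pi>)
      = (\<integral>\<^sup>+ x. ennreal (((d (fst (fst x)) + d (snd (fst x))) / 2)\<^sup>2) \<partial>((\<pi> \<Otimes>\<^sub>M \<pi>) \<Otimes>\<^sub>M Gamma_measure A))"
  proof -
    have midpoint_diff: "(x + x') / 2 + z - ((y + y') / 2 + z) = ((x - y) + (x' - y')) / 2"
      for x x' y y' z :: real
      by (simp add: field_simps)
    show ?thesis
      unfolding transport_cost_def midpoint_coupling_def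
      by (subst nn_integral_distr) (measurable, simp only: midpoint_diff d_def split_beta' fst_conv snd_conv)
  qed
  also have "\<dots> = (\<integral>\<^sup>+ pq. ennreal (((d (fst pq) + d (snd pq)) / 2)\<^sup>2) \<partial>(\<pi> \<Otimes>\<^sub>M \<pi>))"
    by (subst N.nn_integral_fst[symmetric]) (auto simp: N.emeasure_space_1)
  also have "\<dots> = (\<integral>\<^sup>+ p. \<integral>\<^sup>+ q. ennreal (((d p + d q) / 2)\<^sup>2) \<partial>\<pi> \<partial>\<pi>)"
    by (subst \<pi>.nn_integral_fst[symmetric]) auto
  also have "\<dots> = ennreal (((\<integral>p. (d p)\<^sup>2 \<partial>\<pi>) + (\<integral>p. d p \<partial>\<pi>)\<^sup>2) / 2)"
    using assms(4) by (intro \<pi>.nn_integral_square_half_sum) (auto simp: d_def)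
  finally show ?thesis by (simp add: d_def)
qed

lemma W2_sq_T_op_le:
  assumes "A > 0" and \<mu>: "prob_2 \<mu>" and \<nu>: "prob_2 \<nu>" and mean: "(\<integral>y. y \<partial>\<mu>) = (\<integral>y. y \<partial>\<nu>)"
  shows "2 * W2_sq (T_op A \<mu>) (T_op A \<nu>) \<le> W2_sq \<mu> \<nu>"
  unfolding W2_sq_eq_INF_transport_cost[of \<mu> \<nu>]
proof (rule INF_greatest)
  fix \<pi> assume \<pi>: "\<pi> \<in> couplings \<mu> \<nu>"
  have "prob_space \<pi>" and sets_\<pi>: "sets \<pi> = sets (borel \<Otimes>\<^sub>M borel)"
    using couplingsD[OF \<pi>] by simp_all
  have square: "integrable \<pi> (\<lambda>p. (fst p - snd p)\<^sup>2)"
    using \<mu> \<nu> by (intro couplings_integrable_square_diff[OF \<pi>]) (simp_all add: prob_2_def)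
  have "integrable \<mu> (\<lambda>y. y)" and "integrable \<nu> (\<lambda>y. y)"
    using \<mu> \<nu> unfolding prob_2_def
    by (auto intro: finite_measure.square_integrable_imp_integrable prob_space.finite_measure)
  then have centred: "(\<integral>p. fst p - snd p \<partial>\<pi>) = 0"
    using couplings_integral_diff[OF \<pi>] mean by simp
  define E where "E = (\<integral>p. (fst p - snd p)\<^sup>2 \<partial>\<pi>)"
  have "2 * W2_sq (T_op A \<mu>) (T_op A \<nu>) \<le> 2 * transport_cost (midpoint_coupling A \<pi>)"
    unfolding W2_sq_eq_INF_transport_cost
    by (intro mult_left_mono INF_lower midpoint_coupling_in_couplings \<open>A > 0\<close> \<pi>) simp
  also have "\<dots> = 2 * ennreal (E / 2)"
    using transport_cost_midpoint_coupling[OF \<open>A > 0\<close> \<open>prob_space \<pi>\<close> sets_\<pi> square]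
    by (simp add: centred E_def)
  also have "\<dots> = ennreal E"
    by (subst ennreal_numeral[symmetric], subst ennreal_mult[symmetric]) (auto simp: E_def)
  also have "\<dots> = transport_cost \<pi>"
    using square by (simp add: transport_cost_eq_integral E_def)
  finally show "2 * W2_sq (T_op A \<mu>) (T_op A \<nu>) \<le> transport_cost \<pi>" .
qed

theorem theorem2:
  fixes A :: real and n m :: "real measure"
  assumes "A > 0"
    and "prob_2 n" and "prob_2 m"
    and "(\<integral>y. y \<partial>n) = (\<integral>y. y \<partial>m)"
  shows "W2 (T_op A n) (T_op A m) \<le> (1 / sqrt 2) * W2 n m"
proof -
  have "2 * W2_sq (T_op A n) (T_op A m) \<le> W2_sq n m"
    using assms by (rule W2_sq_T_op_le)
  moreover have "W2_sq n m < \<infinity>"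
    using assms(2,3) by (rule W2_sq_less_top)
  ultimately have "enn2real (2 * W2_sq (T_op A n) (T_op A m)) \<le> enn2real (W2_sq n m)"
    by (intro enn2real_mono) simp_all
  then have "sqrt (enn2real (W2_sq (T_op A n) (T_op A m))) \<le> sqrt (enn2real (W2_sq n m) / 2)"
    by (simp add: enn2real_mult)
  also have "\<dots> = (1 / sqrt 2) * sqrt (enn2real (W2_sq n m))"
    by (simp add: real_sqrt_divide)
  finally show ?thesis
    unfolding W2_def .
qed

end
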